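(* Let $G$ be a finite abelian group and $G_0\subseteq G$. Then $c(\mathcal{B}(G_0))\le\dfrac{2\,\mathsf{d}(G_0)+2}{\min\{|\alpha|:\alpha\in\mathcal{A}(\mathcal{B}(G_0))\}}$.
   Context: $G$ is written multiplicatively. $\mathcal{B}(G_0)=\{\alpha\in\mathbb{N}_0^{G_0}\mid\prod_{g\in G_0}g^{\alpha(g)}=1\}$, a reduced affine submonoid of $(\mathbb{N}_0^{G_0},+)$ with finite atom set $\mathcal{A}(\mathcal{B}(G_0))$; $|\alpha|=\sum_g\alpha(g)$. Catenary degree: for $\beta,\gamma\in\mathbb{N}_0^{\mathcal{A}}$ ($\mathcal{A}=\mathcal{A}(\mathcal{B}(G_0))$) let $a^{\beta}=\sum_a\beta(a)a$, $\|\beta\|=\sum_a\beta(a)$, $\gcd(\beta,\gamma)(a)=\min\{\beta(a),\gamma(a)\}$, $d(\beta,\gamma)=\max\{\|\beta-\gcd\|,\|\gamma-\gcd\|\}$; $c(\mathcal{B}(G_0))$ is the minimal non-negative $d$ such that whenever $a^{\beta}=a^{\gamma}$ there is a chain $\beta=\beta^{(0)},\dots,\beta^{(k)}=\gamma$ with $a^{\beta^{(j)}}=a^{\beta^{(j+1)}}$ and $d(\beta^{(j)},\beta^{(j+1)})\le d$. $\mathsf{d}(G_0)$ is the maximal length of a sequence over $G_0$ containing no nonempty product-one subsequence. *)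

theory Defs
  imports "HOL-Algebra.Algebra"
begin

text \<open>Elements of the ambient free monoid N_0^{G_0}: functions 'a => nat vanishing off G_0.\<close>
definition supp_in :: "'a set \<Rightarrow> ('a \<Rightarrow> nat) \<Rightarrow> bool" where
  "supp_in G0 \<alpha> \<longleftrightarrow> (\<forall>g. g \<notin> G0 \<longrightarrow> \<alpha> g = 0)"

definition seq_prod :: "('a, 'b) monoid_scheme \<Rightarrow> 'a set \<Rightarrow> ('a \<Rightarrow> nat) \<Rightarrow> 'a" where
  "seq_prod G G0 \<alpha> = finprod G (\<lambda>g. g [^]\<^bsub>G\<^esub> \<alpha> g) G0"

definition seq_len :: "'a set \<Rightarrow> ('a \<Rightarrow> nat) \<Rightarrow> nat" where
  "seq_len G0 \<alpha> = (\<Sum>g\<in>G0. \<alpha> g)"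

definition BG0 :: "('a, 'b) monoid_scheme \<Rightarrow> 'a set \<Rightarrow> ('a \<Rightarrow> nat) set" where
  "BG0 G G0 = {\<alpha>. supp_in G0 \<alpha> \<and> seq_prod G G0 \<alpha> = \<one>\<^bsub>G\<^esub>}"

definition atoms :: "('a, 'b) monoid_scheme \<Rightarrow> 'a set \<Rightarrow> ('a \<Rightarrow> nat) set" where
  "atoms G G0 = {\<alpha> \<in> BG0 G G0. \<alpha> \<noteq> (\<lambda>_. 0) \<and>
      (\<forall>\<beta>\<in>BG0 G G0. \<forall>\<gamma>\<in>BG0 G G0. \<alpha> = (\<lambda>g. \<beta> g + \<gamma> g) \<longrightarrow>
          \<beta> = (\<lambda>_. 0) \<or> \<gamma> = (\<lambda>_. 0))}"

text \<open>Factorizations: elements of N_0^A, i.e. functions on atoms vanishing off the atom set.\<close>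
definition factorizations :: "('a, 'b) monoid_scheme \<Rightarrow> 'a set \<Rightarrow> (('a \<Rightarrow> nat) \<Rightarrow> nat) set" where
  "factorizations G G0 = {\<beta>. \<forall>a. a \<notin> atoms G G0 \<longrightarrow> \<beta> a = 0}"

definition fact_eval :: "('a, 'b) monoid_scheme \<Rightarrow> 'a set \<Rightarrow> (('a \<Rightarrow> nat) \<Rightarrow> nat) \<Rightarrow> ('a \<Rightarrow> nat)" where
  "fact_eval G G0 \<beta> = (\<lambda>g. \<Sum>a\<in>atoms G G0. \<beta> a * a g)"

definition fact_dist :: "('a, 'b) monoid_scheme \<Rightarrow> 'a set \<Rightarrow> (('a \<Rightarrow> nat) \<Rightarrow> nat) \<Rightarrow> (('a \<Rightarrow> nat) \<Rightarrow> nat) \<Rightarrow> nat" where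
  "fact_dist G G0 \<beta> \<gamma> = max (\<Sum>a\<in>atoms G G0. \<beta> a - min (\<beta> a) (\<gamma> a))
                              (\<Sum>a\<in>atoms G G0. \<gamma> a - min (\<beta> a) (\<gamma> a))"

definition catenary_bound :: "('a, 'b) monoid_scheme \<Rightarrow> 'a set \<Rightarrow> nat \<Rightarrow> bool" where
  "catenary_bound G G0 d \<longleftrightarrow>
     (\<forall>\<beta>\<in>factorizations G G0. \<forall>\<gamma>\<in>factorizations G G0.
        fact_eval G G0 \<beta> = fact_eval G G0 \<gamma> \<longrightarrow>
        (\<exists>xs. xs \<noteq> [] \<and> hd xs = \<beta> \<and> last xs = \<gamma> \<and>
              (\<forall>x\<in>set xs. x \<in> factorizations G G0 \<and> fact_eval G G0 x = fact_eval G G0 \<beta>) \<and>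
              (\<forall>j. Suc j < length xs \<longrightarrow> fact_dist G G0 (xs ! j) (xs ! Suc j) \<le> d)))"

definition catenary_degree :: "('a, 'b) monoid_scheme \<Rightarrow> 'a set \<Rightarrow> nat" where
  "catenary_degree G G0 = (LEAST d. catenary_bound G G0 d)"

definition product_one_free :: "('a, 'b) monoid_scheme \<Rightarrow> 'a set \<Rightarrow> ('a \<Rightarrow> nat) \<Rightarrow> bool" where
  "product_one_free G G0 \<alpha> \<longleftrightarrow>
     (\<forall>\<beta>. (\<forall>g. \<beta> g \<le> \<alpha> g) \<and> \<beta> \<noteq> (\<lambda>_. 0) \<longrightarrow> seq_prod G G0 \<beta> \<noteq> \<one>\<^bsub>G\<^esub>)"

definition davenport :: "('a, 'b) monoid_scheme \<Rightarrow> 'a set \<Rightarrow> nat" where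
  "davenport G G0 = Max {seq_len G0 \<alpha> | \<alpha>. supp_in G0 \<alpha> \<and> product_one_free G G0 \<alpha>}"

end

theory Submission
  imports Defs "HOL-Library.Function_Algebras" "HOL-Library.Indicator_Function"
begin

text \<open>
  Let N = (2 d(G_0) + 2) div m, where m is the minimal length of an atom. Any two factorizations
  of an element x of B(G_0) are joined by an N-chain, by induction on |x|. If both have at most
  N atoms, their distance is at most N. Otherwise |x| > 2 d(G_0) + 2, and then the graph on the
  atoms dividing x, with a and b adjacent when a + b divides x, is connected: if x - max(a, b)
  is longer than d(G_0) it contains an atom adjacent to both a and b; otherwise max(a, b) is
  longer than d(G_0) + 2, so it still contains an atom c after removing one element where a
  exceeds b and one where b exceeds a, and both max(a, c) and max(c, b) are shorter than
  max(a, b). Two factorizations sharing an atom are chained by induction after cancelling it,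
  and a path of adjacent atoms from an atom of one factorization to an atom of the other is
  followed through factorizations containing the sum of two consecutive atoms.
\<close>

locale block_monoid =
  comm_group G for G :: "('a, 'b) monoid_scheme" (structure) +
  fixes G0 :: "'a set"
  assumes finite_carrier: "finite (carrier G)" and G0_subset: "G0 \<subseteq> carrier G"
begin

abbreviation "\<B> \<equiv> BG0 G G0"
abbreviation "\<A> \<equiv> atoms G G0"
abbreviation "len \<equiv> seq_len G0"
abbreviation "\<D> \<equiv> davenport G G0"

lemma finite_G0: "finite G0"
  using finite_carrier G0_subset finite_subset by blast

lemma seq_prod_closed: "seq_prod G G0 f \<in> carrier G"
  unfolding seq_prod_def using G0_subset by (intro finprod_closed) auto

lemma seq_prod_add: "seq_prod G G0 (f + g) = seq_prod G G0 f \<otimes> seq_prod G G0 g"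
  unfolding seq_prod_def using G0_subset
  by (subst finprod_multf[symmetric]) (auto intro!: finprod_cong' simp: nat_pow_mult)

lemma seq_prod_zero: "seq_prod G G0 0 = \<one>"
  by (simp add: seq_prod_def)

lemma seq_len_add: "len (f + g) = len f + len g"
  by (simp add: seq_len_def sum.distrib)

lemma seq_len_diff: "g \<le> f \<Longrightarrow> len (f - g) = len f - len g"
  by (simp add: seq_len_def le_fun_def sum_subtractf_nat)

lemma seq_len_mono: "g \<le> f \<Longrightarrow> len g \<le> len f"
  by (simp add: seq_len_def le_fun_def sum_mono)

lemma seq_len_strict_mono: "g \<le> f \<Longrightarrow> g h < f h \<Longrightarrow> h \<in> G0 \<Longrightarrow> len g < len f"
  unfolding seq_len_def le_fun_def by (intro sum_strict_mono_ex1 finite_G0) auto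

lemma seq_len_pos:
  assumes "supp_in G0 f" "f \<noteq> 0"
  shows "0 < len f"
proof -
  obtain h where "f h \<noteq> 0"
    using assms(2) by (auto simp: fun_eq_iff)
  moreover have "h \<in> G0"
    using assms(1) calculation by (auto simp: supp_in_def)
  ultimately show ?thesis
    unfolding seq_len_def using finite_G0 member_le_sum[of h G0 f] by simp
qed

lemma supp_in_mono: "supp_in G0 f \<Longrightarrow> g \<le> f \<Longrightarrow> supp_in G0 g"
  unfolding supp_in_def le_fun_def by (metis le_zero_eq)

lemma seq_len_indicator: "h \<in> G0 \<Longrightarrow> len (indicator {h}) = 1"
  unfolding seq_len_def using finite_G0 by (simp add: indicator_def)

lemma blocks_supp_in: "f \<in> \<B> \<Longrightarrow> supp_in G0 f"
  by (simp add: BG0_def)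

lemma zero_in_blocks: "0 \<in> \<B>"
  by (simp add: BG0_def supp_in_def seq_prod_zero)

lemma blocks_add: "f \<in> \<B> \<Longrightarrow> g \<in> \<B> \<Longrightarrow> f + g \<in> \<B>"
  by (auto simp: BG0_def supp_in_def seq_prod_add)

lemma blocks_diff:
  assumes "f \<in> \<B>" "g \<in> \<B>" "g \<le> f"
  shows "f - g \<in> \<B>"
proof -
  have "f = (f - g) + g"
    using assms(3) by (simp add: fun_eq_iff le_fun_def)
  then have "seq_prod G G0 f = seq_prod G G0 (f - g) \<otimes> seq_prod G G0 g"
    by (metis seq_prod_add)
  then have "seq_prod G G0 (f - g) = \<one>"
    using assms(1,2) seq_prod_closed by (simp add: BG0_def)
  then show ?thesis
    using assms(1) supp_in_mono[of f "f - g"] by (auto simp: BG0_def le_fun_def)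
qed

lemma blocks_scale: "a \<in> \<B> \<Longrightarrow> (\<lambda>k. n * a k) \<in> \<B>"
proof (induction n)
  case (Suc n)
  then have "a + (\<lambda>k. n * a k) \<in> \<B>"
    by (simp add: blocks_add)
  then show ?case
    by (simp add: plus_fun_def)
qed (use zero_in_blocks in \<open>simp add: zero_fun_def\<close>)

lemma blocks_sum: "finite S \<Longrightarrow> (\<And>s. s \<in> S \<Longrightarrow> f s \<in> \<B>) \<Longrightarrow> (\<lambda>k. \<Sum>s\<in>S. f s k) \<in> \<B>"
proof (induction S rule: finite_induct)
  case (insert s S)
  then have "f s + (\<lambda>k. \<Sum>s\<in>S. f s k) \<in> \<B>"
    by (simp add: blocks_add)
  with insert.hyps show ?case
    by (simp add: plus_fun_def)
qed (use zero_in_blocks in \<open>simp add: zero_fun_def\<close>)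

lemma atom_in_blocks: "a \<in> \<A> \<Longrightarrow> a \<in> \<B>"
  by (simp add: atoms_def)

lemma atom_nonzero: "a \<in> \<A> \<Longrightarrow> a \<noteq> 0"
  by (simp add: atoms_def zero_fun_def)

lemma atom_len_pos: "a \<in> \<A> \<Longrightarrow> 0 < len a"
  by (simp add: seq_len_pos blocks_supp_in atom_in_blocks atom_nonzero)

lemma atom_indecomposable:
  "a \<in> \<A> \<Longrightarrow> b \<in> \<B> \<Longrightarrow> c \<in> \<B> \<Longrightarrow> a = b + c \<Longrightarrow> b = 0 \<or> c = 0"
  unfolding atoms_def plus_fun_def zero_fun_def by blast

lemma decomposable_if_not_atom:
  "f \<in> \<B> \<Longrightarrow> f \<noteq> 0 \<Longrightarrow> f \<notin> \<A> \<Longrightarrow> \<exists>b\<in>\<B>. \<exists>c\<in>\<B>. f = b + c \<and> b \<noteq> 0 \<and> c \<noteq> 0"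
  unfolding atoms_def plus_fun_def zero_fun_def by blast

lemma block_le_atom_eq:
  assumes "a \<in> \<A>" "b \<in> \<B>" "b \<le> a" "b \<noteq> 0"
  shows "b = a"
proof -
  have "a = b + (a - b)"
    using assms(3) by (simp add: fun_eq_iff le_fun_def)
  moreover have "a - b \<in> \<B>"
    using assms by (simp add: blocks_diff atom_in_blocks)
  ultimately have "a - b = 0"
    using atom_indecomposable assms(1,2,4) by blast
  then show ?thesis
    using assms(3) by (simp add: fun_eq_iff le_fun_def) (metis antisym)
qed

lemma exists_atom_le: "f \<in> \<B> \<Longrightarrow> f \<noteq> 0 \<Longrightarrow> \<exists>a\<in>\<A>. a \<le> f"
proof (induction "len f" arbitrary: f rule: less_induct)
  case less
  show ?case
  proof (cases "f \<in> \<A>")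
    case False
    then obtain b c where "b \<in> \<B>" "c \<in> \<B>" "f = b + c" "b \<noteq> 0" "c \<noteq> 0"
      using decomposable_if_not_atom less.prems by blast
    moreover have "len b < len f"
      using calculation seq_len_pos[OF blocks_supp_in] by (simp add: seq_len_add)
    ultimately obtain a where "a \<in> \<A>" "a \<le> b"
      using less.hyps by blast
    then show ?thesis
      using \<open>f = b + c\<close> by (auto simp: le_fun_def intro!: bexI[of _ a] trans_le_add1)
  qed auto
qed

subsection \<open>The Davenport constant\<close>

lemma seq_prod_indicator_pow:
  assumes "h \<in> G0"
  shows "seq_prod G G0 (\<lambda>k. n * indicator {h} k) = h [^] n"
proof -
  have "seq_prod G G0 (\<lambda>k. n * indicator {h} k) = (\<Otimes>k\<in>G0. if k = h then k [^] n else \<one>)"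
    unfolding seq_prod_def using G0_subset by (intro finprod_cong') auto
  also have "\<dots> = h [^] n"
    using assms G0_subset finite_G0 by (intro finprod_singleton_swap) auto
  finally show ?thesis .
qed

lemma product_one_free_le_order:
  assumes "product_one_free G G0 f" "h \<in> G0"
  shows "f h < order G"
proof (rule ccontr)
  define b where "b = (\<lambda>k. order G * indicator {h} k)"
  assume "\<not> f h < order G"
  then have "\<forall>k. b k \<le> f k"
    by (simp add: b_def indicator_def)
  moreover have "b \<noteq> (\<lambda>_. 0)"
    using finite_carrier by (simp add: b_def fun_eq_iff order_gt_0_iff_finite exI[of _ h])
  moreover have "seq_prod G G0 b = \<one>"
    using assms(2) G0_subset by (auto simp: b_def seq_prod_indicator_pow pow_order_eq_1)
  ultimately show False
    using assms(1) unfolding product_one_free_def by blast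
qed

lemma seq_len_le_davenport:
  assumes "supp_in G0 f" "product_one_free G G0 f"
  shows "len f \<le> \<D>"
proof -
  let ?S = "{seq_len G0 \<alpha> | \<alpha>. supp_in G0 \<alpha> \<and> product_one_free G G0 \<alpha>}"
  have "?S \<subseteq> {..card G0 * order G}"
  proof
    fix n assume "n \<in> ?S"
    then obtain \<alpha> where n: "n = len \<alpha>" and "product_one_free G G0 \<alpha>"
      by blast
    then have "n \<le> (\<Sum>h\<in>G0. order G)"
      unfolding n seq_len_def using product_one_free_le_order by (intro sum_mono) (simp add: less_imp_le)
    then show "n \<in> {..card G0 * order G}"
      by simp
  qed
  then have "finite ?S"
    by (rule finite_subset) simp
  then show ?thesis
    unfolding davenport_def using assms by (intro Max_ge) blast+
qed

lemma exists_atom_le_long_seq: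
  assumes "supp_in G0 s" "\<D> < len s"
  shows "\<exists>a\<in>\<A>. a \<le> s"
proof -
  have "\<not> product_one_free G G0 s"
    using assms seq_len_le_davenport by fastforce
  then obtain b where "b \<le> s" "b \<noteq> 0" "seq_prod G G0 b = \<one>"
    unfolding product_one_free_def le_fun_def zero_fun_def by blast
  moreover have "supp_in G0 b"
    using assms(1) calculation(1) by (rule supp_in_mono)
  ultimately obtain a where "a \<in> \<A>" "a \<le> b"
    using exists_atom_le by (auto simp: BG0_def)
  then show ?thesis
    using \<open>b \<le> s\<close> by (blast intro: order.trans)
qed

lemma atom_len_le_davenport:
  assumes "a \<in> \<A>"
  shows "len a \<le> \<D> + 1"
proof (rule ccontr)
  assume long: "\<not> len a \<le> \<D> + 1"
  obtain h where "a h \<noteq> 0"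
    using atom_nonzero[OF assms] by (auto simp: fun_eq_iff)
  then have "h \<in> G0"
    using blocks_supp_in[OF atom_in_blocks[OF assms]] by (auto simp: supp_in_def)
  define s where "s = a - indicator {h}"
  have "indicator {h} \<le> a"
    using \<open>a h \<noteq> 0\<close> by (simp add: le_fun_def indicator_def)
  then have "len s = len a - 1"
    by (simp add: s_def seq_len_diff seq_len_indicator \<open>h \<in> G0\<close>)
  moreover have "s \<le> a"
    by (simp add: s_def le_fun_def)
  moreover have "supp_in G0 s"
    using blocks_supp_in[OF atom_in_blocks[OF assms]] \<open>s \<le> a\<close> by (rule supp_in_mono)
  ultimately obtain c where "c \<in> \<A>" "c \<le> s"
    using exists_atom_le_long_seq[of s] long by force
  then have "c = a"
    using block_le_atom_eq[OF assms atom_in_blocks _ atom_nonzero] \<open>s \<le> a\<close> order.trans by blast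
  moreover have "c h < a h"
    using \<open>c \<le> s\<close> \<open>a h \<noteq> 0\<close> by (auto simp: s_def le_fun_def dest: spec[of _ h])
  ultimately show False
    by simp
qed

lemma finite_atoms: "finite \<A>"
proof (rule finite_subset)
  show "\<A> \<subseteq> {f. \<forall>x. (x \<in> G0 \<longrightarrow> f x \<in> {..\<D> + 1}) \<and> (x \<notin> G0 \<longrightarrow> f x = 0)}"
  proof (intro subsetI CollectI allI conjI impI)
    fix a x assume a: "a \<in> \<A>"
    show "a x = 0" if "x \<notin> G0"
      using that blocks_supp_in[OF atom_in_blocks[OF a]] by (simp add: supp_in_def)
    show "a x \<in> {..\<D> + 1}" if "x \<in> G0"
      using that member_le_sum[of x G0 a] finite_G0 atom_len_le_davenport[OF a]
      by (simp add: seq_len_def)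
  qed
  show "finite {f. \<forall>x. (x \<in> G0 \<longrightarrow> f x \<in> {..\<D> + 1}) \<and> (x \<notin> G0 \<longrightarrow> f x = 0)}"
    by (intro finite_set_of_finite_funs finite_G0 finite_atMost)
qed

subsection \<open>Connectivity of the atom graph\<close>

definition atom_adj :: "('a \<Rightarrow> nat) \<Rightarrow> ('a \<Rightarrow> nat) \<Rightarrow> ('a \<Rightarrow> nat) \<Rightarrow> bool" where
  "atom_adj x a b \<longleftrightarrow> a \<in> \<A> \<and> b \<in> \<A> \<and> a + b \<le> x"

lemma atom_le_atom_eq: "a \<in> \<A> \<Longrightarrow> b \<in> \<A> \<Longrightarrow> a \<le> b \<Longrightarrow> a = b"
  by (simp add: block_le_atom_eq atom_in_blocks atom_nonzero)

lemma exists_atom_between: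
  assumes a: "a \<in> \<A>" and b: "b \<in> \<A>" and "a \<noteq> b" and long: "\<D> + 2 < len (sup a b)"
  shows "\<exists>c\<in>\<A>. c \<le> sup a b \<and> len (sup a c) < len (sup a b) \<and> len (sup c b) < len (sup a b)"
proof -
  have "\<not> a \<le> b" "\<not> b \<le> a"
    using atom_le_atom_eq a b \<open>a \<noteq> b\<close> by blast+
  then obtain g h where g: "b g < a g" and h: "a h < b h"
    by (auto simp: le_fun_def not_le)
  have "g \<in> G0" "h \<in> G0"
    using g h blocks_supp_in[OF atom_in_blocks[OF a]] blocks_supp_in[OF atom_in_blocks[OF b]]
    by (auto simp: supp_in_def)
  have "g \<noteq> h"
    using g h by auto
  define s where "s = sup a b - (indicator {g} + indicator {h})"
  have "indicator {g} + indicator {h} \<le> sup a b"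
    using g h \<open>g \<noteq> h\<close> by (auto simp: le_fun_def indicator_def sup_nat_def)
  then have "len s = len (sup a b) - 2"
    using \<open>g \<in> G0\<close> \<open>h \<in> G0\<close> by (simp add: s_def seq_len_diff seq_len_add seq_len_indicator)
  moreover have "supp_in G0 s"
    using blocks_supp_in[OF atom_in_blocks[OF a]] blocks_supp_in[OF atom_in_blocks[OF b]]
    by (auto simp: s_def supp_in_def)
  ultimately obtain c where c: "c \<in> \<A>" "c \<le> s"
    using exists_atom_le_long_seq[of s] long by force
  have "s \<le> sup a b"
    by (simp add: s_def le_fun_def)
  with c have "c \<le> sup a b"
    by (blast intro: order.trans)
  have "c g < a g" "c h < b h"
    using c(2) g h \<open>g \<noteq> h\<close> by (auto simp: s_def le_fun_def sup_nat_def dest: spec[of _ g] spec[of _ h])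
  with \<open>c \<le> sup a b\<close> have "len (sup a c) < len (sup a b)"
    using h \<open>h \<in> G0\<close> by (intro seq_len_strict_mono[where h = h]) (auto simp: le_fun_def sup_nat_def)
  moreover from \<open>c g < a g\<close> \<open>c \<le> sup a b\<close> have "len (sup c b) < len (sup a b)"
    using g \<open>g \<in> G0\<close> by (intro seq_len_strict_mono[where h = g]) (auto simp: le_fun_def sup_nat_def)
  ultimately show ?thesis
    using c(1) \<open>c \<le> sup a b\<close> by blast
qed

lemma atom_adj_connected:
  assumes x: "supp_in G0 x" "2 * \<D> + 2 < len x"
  shows "a \<in> \<A> \<Longrightarrow> b \<in> \<A> \<Longrightarrow> a \<le> x \<Longrightarrow> b \<le> x \<Longrightarrow> (atom_adj x)\<^sup>*\<^sup>* a b"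
proof (induction "len (sup a b)" arbitrary: a b rule: less_induct)
  case less
  have ab_x: "sup a b \<le> x"
    using less.prems by simp
  consider (complement_long) "\<D> < len (x - sup a b)" | (equal) "a = b"
    | (distinct) "a \<noteq> b" "\<D> + 2 < len (sup a b)"
    using x(2) seq_len_diff[OF ab_x] seq_len_mono[OF ab_x] by linarith
  then show ?case
  proof cases
    case complement_long
    moreover have "supp_in G0 (x - sup a b)"
      using x(1) by (auto simp: supp_in_def)
    ultimately obtain w where "w \<in> \<A>" "w \<le> x - sup a b"
      using exists_atom_le_long_seq by blast
    have "a k + w k \<le> x k \<and> w k + b k \<le> x k" for k
      using le_funD[OF \<open>w \<le> x - sup a b\<close>, of k] le_funD[OF \<open>a \<le> x\<close>, of k] le_funD[OF \<open>b \<le> x\<close>, of k]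
      by (auto simp: sup_nat_def max_def split: if_splits)
    then have "atom_adj x a w" "atom_adj x w b"
      using less.prems \<open>w \<in> \<A>\<close> by (auto simp: atom_adj_def le_fun_def)
    then show ?thesis
      by (meson converse_rtranclp_into_rtranclp r_into_rtranclp)
  next
    case distinct
    then obtain c where c: "c \<in> \<A>" "c \<le> sup a b"
      and shorter: "len (sup a c) < len (sup a b)" "len (sup c b) < len (sup a b)"
      using exists_atom_between less.prems by blast
    have "c \<le> x"
      using c(2) ab_x by (rule order.trans)
    then show ?thesis
      using less.hyps[OF shorter(1)] less.hyps[OF shorter(2)] less.prems c(1)
      by (meson rtranclp_trans)
  qed simp
qed

abbreviation "\<F> \<equiv> factorizations G G0"
abbreviation "\<pi> \<equiv> fact_eval G G0"
abbreviation "fdist \<equiv> fact_dist G G0"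

definition fact_len :: "(('a \<Rightarrow> nat) \<Rightarrow> nat) \<Rightarrow> nat" where
  "fact_len z = (\<Sum>a\<in>\<A>. z a)"

lemma factorizations_add: "z \<in> \<F> \<Longrightarrow> w \<in> \<F> \<Longrightarrow> z + w \<in> \<F>"
  by (simp add: factorizations_def)

lemma indicator_in_factorizations: "a \<in> \<A> \<Longrightarrow> indicator {a} \<in> \<F>"
  by (auto simp: factorizations_def indicator_def)

lemma factorizations_atom: "z \<in> \<F> \<Longrightarrow> z a \<noteq> 0 \<Longrightarrow> a \<in> \<A>"
  by (auto simp: factorizations_def)

lemma factorization_remove_atom:
  assumes "z \<in> \<F>" "z a \<noteq> 0"
  shows "z - indicator {a} \<in> \<F>" "z = (z - indicator {a}) + indicator {a}"
  using assms by (auto simp: factorizations_def indicator_def fun_eq_iff[of z])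

lemma fact_eval_add: "\<pi> (z + w) = \<pi> z + \<pi> w"
  by (simp add: fact_eval_def fun_eq_iff sum.distrib distrib_right)

lemma fact_eval_zero: "\<pi> 0 = 0"
  by (simp add: fact_eval_def zero_fun_def)

lemma fact_eval_indicator:
  assumes "a \<in> \<A>"
  shows "\<pi> (indicator {a}) = a"
proof
  fix k
  have "\<pi> (indicator {a}) k = (\<Sum>b\<in>\<A>. if b = a then a k else 0)"
    unfolding fact_eval_def by (rule sum.cong) (auto simp: indicator_def)
  also have "\<dots> = a k"
    using assms finite_atoms by simp
  finally show "\<pi> (indicator {a}) k = a k" .
qed

lemma fact_eval_in_blocks: "\<pi> z \<in> \<B>"
  unfolding fact_eval_def
  by (intro blocks_sum finite_atoms blocks_scale atom_in_blocks)

lemma exists_factorization: "y \<in> \<B> \<Longrightarrow> \<exists>z\<in>\<F>. \<pi> z = y"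
proof (induction "len y" arbitrary: y rule: less_induct)
  case less
  consider (zero) "y = 0" | (atom) "y \<in> \<A>" | (decomposable) "y \<noteq> 0" "y \<notin> \<A>"
    by blast
  then show ?case
  proof cases
    case zero
    then show ?thesis
      using fact_eval_zero by (auto simp: factorizations_def zero_fun_def intro!: bexI[of _ 0])
  next
    case atom
    then show ?thesis
      using fact_eval_indicator indicator_in_factorizations by blast
  next
    case decomposable
    then obtain b c where bc: "b \<in> \<B>" "c \<in> \<B>" "y = b + c" "b \<noteq> 0" "c \<noteq> 0"
      using decomposable_if_not_atom less.prems by blast
    then have "len b < len y" "len c < len y"
      using seq_len_pos[OF blocks_supp_in] by (auto simp: seq_len_add)
    then obtain zb zc where "zb \<in> \<F>" "\<pi> zb = b" "zc \<in> \<F>" "\<pi> zc = c"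
      using less.hyps bc(1,2) by meson
    then show ?thesis
      using bc(3) by (metis factorizations_add fact_eval_add)
  qed
qed

lemma atom_le_fact_eval:
  assumes "z \<in> \<F>" "z a \<noteq> 0"
  shows "a \<le> \<pi> z"
proof (rule le_funI)
  fix k
  have "a k \<le> z a * a k"
    using assms(2) by simp
  also have "\<dots> \<le> (\<Sum>b\<in>\<A>. z b * b k)"
    using factorizations_atom[OF assms] finite_atoms by (intro member_le_sum) auto
  finally show "a k \<le> \<pi> z k"
    by (simp add: fact_eval_def)
qed

lemma seq_len_fact_eval: "len (\<pi> z) = (\<Sum>a\<in>\<A>. z a * len a)"
  unfolding seq_len_def fact_eval_def
  by (subst sum.swap) (simp add: sum_distrib_left)

lemma min_atom_len_mult_fact_len: "Min (len ` \<A>) * fact_len z \<le> len (\<pi> z)"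
proof -
  have "Min (len ` \<A>) * fact_len z = (\<Sum>a\<in>\<A>. z a * Min (len ` \<A>))"
    by (simp add: fact_len_def sum_distrib_right mult.commute)
  also have "\<dots> \<le> (\<Sum>a\<in>\<A>. z a * len a)"
    using finite_atoms by (intro sum_mono) simp
  finally show ?thesis
    by (simp add: seq_len_fact_eval)
qed

lemma fact_dist_add: "fdist (z + w) (z' + w) = fdist z z'"
proof -
  have "z a + w a - min (z a + w a) (z' a + w a) = z a - min (z a) (z' a)"
    "z' a + w a - min (z a + w a) (z' a + w a) = z' a - min (z a) (z' a)" for a
    by (simp_all add: min_def)
  then show ?thesis
    by (simp add: fact_dist_def)
qed

lemma fact_dist_le_fact_len: "fdist z z' \<le> max (fact_len z) (fact_len z')"
proof -
  have "(\<Sum>a\<in>\<A>. z a - min (z a) (z' a)) \<le> fact_len z"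
    "(\<Sum>a\<in>\<A>. z' a - min (z a) (z' a)) \<le> fact_len z'"
    unfolding fact_len_def by (auto intro: sum_mono)
  then show ?thesis
    unfolding fact_dist_def by linarith
qed

subsection \<open>Chains of factorizations\<close>

definition chain_step :: "nat \<Rightarrow> (('a \<Rightarrow> nat) \<Rightarrow> nat) \<Rightarrow> (('a \<Rightarrow> nat) \<Rightarrow> nat) \<Rightarrow> bool" where
  "chain_step N z z' \<longleftrightarrow> z \<in> \<F> \<and> z' \<in> \<F> \<and> \<pi> z = \<pi> z' \<and> fdist z z' \<le> N"

lemma chain_add:
  assumes "(chain_step N)\<^sup>*\<^sup>* z z'" "w \<in> \<F>"
  shows "(chain_step N)\<^sup>*\<^sup>* (z + w) (z' + w)"
  using assms(1)
proof (induction rule: rtranclp_induct)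
  case (step y y')
  then have "chain_step N (y + w) (y' + w)"
    using assms(2) by (simp add: chain_step_def factorizations_add fact_eval_add fact_dist_add)
  with step.IH show ?case
    by (meson rtranclp.rtrancl_into_rtrancl)
qed simp

lemma chain_list:
  assumes "(chain_step N)\<^sup>*\<^sup>* z z'" "z \<in> \<F>"
  shows "\<exists>xs. xs \<noteq> [] \<and> hd xs = z \<and> last xs = z' \<and> (\<forall>y\<in>set xs. y \<in> \<F> \<and> \<pi> y = \<pi> z) \<and>
           (\<forall>j. Suc j < length xs \<longrightarrow> fdist (xs ! j) (xs ! Suc j) \<le> N)"
  using assms
proof (induction rule: converse_rtranclp_induct)
  case base
  then show ?case
    by (intro exI[of _ "[z']"]) simp
next
  case (step y y')
  then have "y' \<in> \<F>" "\<pi> y = \<pi> y'" "fdist y y' \<le> N"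
    by (simp_all add: chain_step_def)
  then obtain xs where xs: "xs \<noteq> []" "hd xs = y'" "last xs = z'" "\<forall>u\<in>set xs. u \<in> \<F> \<and> \<pi> u = \<pi> y"
    "\<forall>j. Suc j < length xs \<longrightarrow> fdist (xs ! j) (xs ! Suc j) \<le> N"
    using step.IH by auto
  have "fdist ((y # xs) ! j) ((y # xs) ! Suc j) \<le> N" if "Suc j < length (y # xs)" for j
    using that xs \<open>fdist y y' \<le> N\<close> by (cases j) (simp_all add: hd_conv_nth)
  then show ?case
    using xs step.prems by (intro exI[of _ "y # xs"]) auto
qed

lemma catenary_boundI:
  assumes "\<And>z z'. z \<in> \<F> \<Longrightarrow> z' \<in> \<F> \<Longrightarrow> \<pi> z = \<pi> z' \<Longrightarrow> (chain_step N)\<^sup>*\<^sup>* z z'"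
  shows "catenary_bound G G0 N"
  unfolding catenary_bound_def using assms chain_list by blast

lemma chain_via_common_atom:
  assumes IH: "\<And>y y'. len (\<pi> y) < len x \<Longrightarrow> y \<in> \<F> \<Longrightarrow> y' \<in> \<F> \<Longrightarrow> \<pi> y = \<pi> y' \<Longrightarrow>
      (chain_step N)\<^sup>*\<^sup>* y y'"
    and z: "z \<in> \<F>" "\<pi> z = x" "z c \<noteq> 0" and z': "z' \<in> \<F>" "\<pi> z' = x" "z' c \<noteq> 0"
  shows "(chain_step N)\<^sup>*\<^sup>* z z'"
proof -
  have c: "c \<in> \<A>"
    using factorizations_atom z by blast
  define r where "r = z - indicator {c}"
  define r' where "r' = z' - indicator {c}"
  have r: "r \<in> \<F>" "z = r + indicator {c}" and r': "r' \<in> \<F>" "z' = r' + indicator {c}"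
    unfolding r_def r'_def using factorization_remove_atom z z' by blast+
  have "\<pi> r + c = x" "\<pi> r' + c = x"
    using r(2) r'(2) z(2) z'(2) by (simp_all add: fact_eval_add fact_eval_indicator[OF c])
  then have "\<pi> r = \<pi> r'" "len (\<pi> r) < len x"
    using atom_len_pos[OF c] by (auto simp: seq_len_add)
  then have "(chain_step N)\<^sup>*\<^sup>* r r'"
    using IH r(1) r'(1) by blast
  then show ?thesis
    using chain_add indicator_in_factorizations[OF c] r(2) r'(2) by metis
qed

lemma chain_via_atom_path:
  assumes IH: "\<And>y y'. len (\<pi> y) < len x \<Longrightarrow> y \<in> \<F> \<Longrightarrow> y' \<in> \<F> \<Longrightarrow> \<pi> y = \<pi> y' \<Longrightarrow>
      (chain_step N)\<^sup>*\<^sup>* y y'"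
    and "(atom_adj x)\<^sup>*\<^sup>* a b"
  shows "z \<in> \<F> \<Longrightarrow> \<pi> z = x \<Longrightarrow> z a \<noteq> 0 \<Longrightarrow> z' \<in> \<F> \<Longrightarrow> \<pi> z' = x \<Longrightarrow> z' b \<noteq> 0 \<Longrightarrow>
    (chain_step N)\<^sup>*\<^sup>* z z'"
  using assms(2)
proof (induction arbitrary: z rule: converse_rtranclp_induct)
  case base
  then show ?case
    using chain_via_common_atom[OF IH] by blast
next
  case (step a a')
  then have a: "a \<in> \<A>" and a': "a' \<in> \<A>" and "a + a' \<le> x"
    by (simp_all add: atom_adj_def)
  moreover have "x \<in> \<B>"
    using fact_eval_in_blocks step.prems(2) by blast
  ultimately have "x - (a + a') \<in> \<B>"
    by (simp add: blocks_diff blocks_add atom_in_blocks)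
  then obtain w where w: "w \<in> \<F>" "\<pi> w = x - (a + a')"
    using exists_factorization by blast
  define y where "y = w + indicator {a} + indicator {a'}"
  have "\<pi> y = (x - (a + a')) + (a + a')"
    by (simp add: y_def fact_eval_add fact_eval_indicator a a' w(2) add.assoc)
  also have "\<dots> = x"
    using le_funD[OF \<open>a + a' \<le> x\<close>] by (simp add: fun_eq_iff)
  finally have "\<pi> y = x" .
  moreover have "y \<in> \<F>"
    using w(1) a a' by (simp add: y_def factorizations_add indicator_in_factorizations)
  moreover have "y a \<noteq> 0" "y a' \<noteq> 0"
    by (simp_all add: y_def)
  ultimately have "(chain_step N)\<^sup>*\<^sup>* z y" "(chain_step N)\<^sup>*\<^sup>* y z'"
    using chain_via_common_atom[OF IH step.prems(1-3)] step.IH[OF _ _ _ step.prems(4-6)] by blast+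
  then show ?case
    by (rule rtranclp_trans)
qed

lemma len_fact_eval_gt:
  assumes "q div Min (len ` \<A>) < fact_len z"
  shows "q < len (\<pi> z)"
proof -
  let ?m = "Min (len ` \<A>)"
  have "\<A> \<noteq> {}"
    using assms by (auto simp: fact_len_def)
  then have "?m \<in> len ` \<A>"
    using finite_atoms by simp
  then have "0 < ?m"
    using atom_len_pos by auto
  then have "q < ?m * (q div ?m + 1)"
    using dividend_less_times_div[of ?m q] by simp
  also have "\<dots> \<le> ?m * fact_len z"
    using assms by (intro mult_le_mono2) simp
  also have "\<dots> \<le> len (\<pi> z)"
    by (rule min_atom_len_mult_fact_len)
  finally show ?thesis .
qed

lemma chain_if_long:
  assumes IH: "\<And>y y'. len (\<pi> y) < len x \<Longrightarrow> y \<in> \<F> \<Longrightarrow> y' \<in> \<F> \<Longrightarrow> \<pi> y = \<pi> y' \<Longrightarrow>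
      (chain_step N)\<^sup>*\<^sup>* y y'"
    and long: "2 * \<D> + 2 < len x"
    and z: "z \<in> \<F>" "\<pi> z = x" and z': "z' \<in> \<F>" "\<pi> z' = x"
  shows "(chain_step N)\<^sup>*\<^sup>* z z'"
proof -
  have "z \<noteq> 0" "z' \<noteq> 0"
    using long z(2) z'(2) fact_eval_zero by (auto simp: seq_len_def)
  then obtain a b where a: "z a \<noteq> 0" and b: "z' b \<noteq> 0"
    by (auto simp: fun_eq_iff)
  have "a \<in> \<A>" "b \<in> \<A>" "a \<le> x" "b \<le> x"
    using factorizations_atom[OF z(1) a] factorizations_atom[OF z'(1) b]
      atom_le_fact_eval[OF z(1) a] atom_le_fact_eval[OF z'(1) b] z(2) z'(2) by simp_all
  moreover have "supp_in G0 x"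
    using blocks_supp_in fact_eval_in_blocks z(2) by blast
  ultimately have "(atom_adj x)\<^sup>*\<^sup>* a b"
    using atom_adj_connected long by blast
  from chain_via_atom_path[OF IH this z a z' b] show ?thesis .
qed

lemma factorizations_chained:
  assumes "z \<in> \<F>" "z' \<in> \<F>" "\<pi> z = \<pi> z'"
  shows "(chain_step ((2 * \<D> + 2) div Min (len ` \<A>)))\<^sup>*\<^sup>* z z'"
  using assms
proof (induction "len (\<pi> z)" arbitrary: z z' rule: less_induct)
  case less
  let ?N = "(2 * \<D> + 2) div Min (len ` \<A>)"
  show ?case
  proof (cases "fact_len z \<le> ?N \<and> fact_len z' \<le> ?N")
    case True
    then have "chain_step ?N z z'"
      using fact_dist_le_fact_len[of z z'] less.prems by (auto simp: chain_step_def)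
    then show ?thesis
      by simp
  next
    case False
    then have "?N < fact_len z \<or> ?N < fact_len z'"
      by auto
    then have "2 * \<D> + 2 < len (\<pi> z)"
      using len_fact_eval_gt less.prems(3) by metis
    from chain_if_long[OF _ this less.prems(1) refl less.prems(2) less.prems(3)[symmetric]]
    show ?thesis
      using less.hyps by blast
  qed
qed

lemma catenary_degree_le: "catenary_degree G G0 \<le> (2 * \<D> + 2) div Min (len ` \<A>)"
  unfolding catenary_degree_def
  by (intro Least_le catenary_boundI factorizations_chained)

end

theorem corollary6p5:
  fixes G :: "('a, 'b) monoid_scheme" and G0 :: "'a set"
  assumes "comm_group G" and "finite (carrier G)" and "G0 \<subseteq> carrier G"
  shows "real (catenary_degree G G0)
           \<le> (2 * real (davenport G G0) + 2) / real (Min (seq_len G0 ` atoms G G0))"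
proof -
  interpret block_monoid G G0
    using assms by (simp add: block_monoid_def block_monoid_axioms_def)
  have "real (catenary_degree G G0) \<le> real ((2 * \<D> + 2) div Min (len ` \<A>))"
    using catenary_degree_le by simp
  also have "\<dots> \<le> real (2 * \<D> + 2) / real (Min (len ` \<A>))"
    by (rule of_nat_div_le_of_nat)
  finally show ?thesis
    by (simp add: add.commute)
qed

end
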